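(* Let $P,R\in\mathrm{Sym}(n,\mathbb{R})$ and $Q\in\mathrm{Mat}(n,\mathbb{R})$, let $B=\begin{bmatrix}P^{-1}&-P^{-1}Q\\-Q^TP^{-1}&Q^TP^{-1}Q-R\end{bmatrix}$ and $J=\begin{bmatrix}0&-I_n\\ I_n&0\end{bmatrix}$. If $\begin{bmatrix}P&Q\\Q^T&R\end{bmatrix}$ is positive definite, then $JB$ is hyperbolic.
   Context: A real matrix is hyperbolic if it has no eigenvalue on the imaginary axis. (Positive definiteness of the block matrix forces $P$ to be positive definite, hence invertible.) *)

theory Defs
  imports "Jordan_Normal_Form.Matrix" "Jordan_Normal_Form.Char_Poly"
begin

definition mat_inv :: "'a :: comm_ring_1 mat \<Rightarrow> 'a mat" where
  "mat_inv A = (SOME B. B \<in> carrier_mat (dim_row A) (dim_row A) \<and> inverts_mat A B \<and> inverts_mat B A)"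

definition pos_def_mat :: "real mat \<Rightarrow> bool" where
  "pos_def_mat A = (A \<in> carrier_mat (dim_row A) (dim_row A) \<and> A\<^sup>T = A \<and>
     (\<forall>x \<in> carrier_vec (dim_row A). x \<noteq> 0\<^sub>v (dim_row A) \<longrightarrow> x \<bullet> (A *\<^sub>v x) > 0))"

definition hyperbolic_mat :: "real mat \<Rightarrow> bool" where
  "hyperbolic_mat A = (\<forall>z::complex. eigenvalue (map_mat complex_of_real A) z \<longrightarrow> Re z \<noteq> 0)"

end

theory Submission
  imports Defs
begin

text \<open>Let \<open>(x, y)\<close> be an eigenvector of \<open>J B\<close> with eigenvalue \<open>\<lambda>\<close>. Unwinding the two block
  equations with \<open>P P\<^sup>-\<^sup>1 = I\<close> shows that \<open>M = [P, Q; Q\<^sup>T, R]\<close> maps \<open>w = (\<lambda> y, y)\<close> to \<open>(x, \<lambda> x)\<close>,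
  so \<open>w\<^sup>* M w = (conj \<lambda> + \<lambda>) (y\<^sup>* x) = 2 Re \<lambda> (y\<^sup>* x)\<close>. Since \<open>y = 0\<close> would force \<open>x = 0\<close>,
  \<open>w \<noteq> 0\<close>, and positive definiteness of \<open>M\<close> makes the left-hand side positive; hence
  \<open>Re \<lambda> \<noteq> 0\<close>.\<close>

lemma append_vec_eq_zero_iff:
  assumes "v \<in> carrier_vec n" and "w \<in> carrier_vec m"
  shows "v @\<^sub>v w = 0\<^sub>v (n + m) \<longleftrightarrow> v = 0\<^sub>v n \<and> w = 0\<^sub>v m"
proof -
  have "0\<^sub>v (n + m) = 0\<^sub>v n @\<^sub>v (0\<^sub>v m :: 'a vec)"
    by auto
  then show ?thesis
    using append_vec_eq[OF assms(1) zero_carrier_vec] by simp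
qed

lemma smult_append_vec: "a \<cdot>\<^sub>v (v @\<^sub>v w) = (a \<cdot>\<^sub>v v) @\<^sub>v (a \<cdot>\<^sub>v w)"
  by (intro eq_vecI) auto

lemma mult_mat_vec_zero: "A \<in> carrier_mat nr nc \<Longrightarrow> A *\<^sub>v 0\<^sub>v nc = 0\<^sub>v nr"
  by (intro eq_vecI) auto

lemma (in ring_hom) mat_hom_minus:
  assumes "A \<in> carrier_mat nr nc" and "B \<in> carrier_mat nr nc"
  shows "mat\<^sub>h (A - B) = mat\<^sub>h A - mat\<^sub>h B"
  using assms by (intro eq_matI) (auto simp: hom_distribs)

lemma (in ring_hom) mat_hom_uminus: "mat\<^sub>h (- A) = - mat\<^sub>h A"
  by (intro eq_matI) (auto simp: hom_distribs)

lemma (in ring_hom) mat_hom_symplectic_pivot: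
  assumes Pinv: "Pinv \<in> carrier_mat n n" and Q: "Q \<in> carrier_mat n n"
    and C: "C \<in> carrier_mat n n" and R: "R \<in> carrier_mat n n"
  shows "mat\<^sub>h (four_block_mat (0\<^sub>m n n) (- 1\<^sub>m n) (1\<^sub>m n) (0\<^sub>m n n) *
      four_block_mat Pinv (- (Pinv * Q)) (- (C * Pinv)) (C * Pinv * Q - R)) =
    four_block_mat (0\<^sub>m n n) (- 1\<^sub>m n) (1\<^sub>m n) (0\<^sub>m n n) *
      four_block_mat (mat\<^sub>h Pinv) (- (mat\<^sub>h Pinv * mat\<^sub>h Q)) (- (mat\<^sub>h C * mat\<^sub>h Pinv))
        (mat\<^sub>h C * mat\<^sub>h Pinv * mat\<^sub>h Q - mat\<^sub>h R)"
proof -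
  have blocks: "Pinv * Q \<in> carrier_mat n n" "C * Pinv \<in> carrier_mat n n" "C * Pinv * Q \<in> carrier_mat n n"
    using assms by auto
  have "mat\<^sub>h (four_block_mat (0\<^sub>m n n) (- 1\<^sub>m n) (1\<^sub>m n) (0\<^sub>m n n) *
      four_block_mat Pinv (- (Pinv * Q)) (- (C * Pinv)) (C * Pinv * Q - R)) =
    mat\<^sub>h (four_block_mat (0\<^sub>m n n) (- 1\<^sub>m n) (1\<^sub>m n) (0\<^sub>m n n)) *
      mat\<^sub>h (four_block_mat Pinv (- (Pinv * Q)) (- (C * Pinv)) (C * Pinv * Q - R))"
    by (rule mat_hom_mult[OF four_block_carrier_mat[OF zero_carrier_mat zero_carrier_mat]
          four_block_carrier_mat[OF Pinv minus_carrier_mat[OF R]]])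
  also have "mat\<^sub>h (four_block_mat (0\<^sub>m n n) (- 1\<^sub>m n) (1\<^sub>m n) (0\<^sub>m n n)) =
      four_block_mat (0\<^sub>m n n) (- 1\<^sub>m n) (1\<^sub>m n) (0\<^sub>m n n)"
    by (rule eq_matI) (auto simp: hom_distribs)
  also have "mat\<^sub>h (four_block_mat Pinv (- (Pinv * Q)) (- (C * Pinv)) (C * Pinv * Q - R)) =
      four_block_mat (mat\<^sub>h Pinv) (- (mat\<^sub>h Pinv * mat\<^sub>h Q)) (- (mat\<^sub>h C * mat\<^sub>h Pinv))
        (mat\<^sub>h C * mat\<^sub>h Pinv * mat\<^sub>h Q - mat\<^sub>h R)"
    unfolding map_four_block_mat[OF Pinv uminus_carrier_mat[OF blocks(1)] uminus_carrier_mat[OF blocks(2)]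
        minus_carrier_mat[OF R]] mat_hom_uminus mat_hom_minus[OF blocks(3) R]
      mat_hom_mult[OF blocks(2) Q] mat_hom_mult[OF C Pinv] mat_hom_mult[OF Pinv Q] ..
  finally show ?thesis .
qed

lemma pos_def_matD:
  assumes "pos_def_mat A"
  shows "A \<in> carrier_mat (dim_row A) (dim_row A)" and "A\<^sup>T = A"
    and "\<And>x. x \<in> carrier_vec (dim_row A) \<Longrightarrow> x \<noteq> 0\<^sub>v (dim_row A) \<Longrightarrow> x \<bullet> (A *\<^sub>v x) > 0"
  using assms unfolding pos_def_mat_def by blast+

lemma pos_def_mat_det_nonzero:
  assumes "pos_def_mat A"
  shows "det A \<noteq> 0"
proof
  let ?n = "dim_row A"
  assume "det A = 0"
  then obtain v where v: "v \<in> carrier_vec ?n" "v \<noteq> 0\<^sub>v ?n" and "A *\<^sub>v v = 0\<^sub>v ?n"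
    using det_0_iff_vec_prod_zero[OF pos_def_matD(1)[OF assms]] by blast
  moreover have "v \<bullet> (A *\<^sub>v v) > 0"
    using pos_def_matD(3)[OF assms v] .
  ultimately show False
    by simp
qed

lemma pos_def_mat_four_block_upper_left:
  assumes P: "P \<in> carrier_mat n n" and Q: "Q \<in> carrier_mat n m"
    and C: "C \<in> carrier_mat m n" and R: "R \<in> carrier_mat m m"
    and "P\<^sup>T = P" and M: "pos_def_mat (four_block_mat P Q C R)"
  shows "pos_def_mat P"
  unfolding pos_def_mat_def
proof (intro conjI ballI impI)
  fix x :: "real vec"
  assume "x \<in> carrier_vec (dim_row P)" "x \<noteq> 0\<^sub>v (dim_row P)"
  then have x: "x \<in> carrier_vec n" "x \<noteq> 0\<^sub>v n"
    using P by auto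
  have "four_block_mat P Q C R *\<^sub>v (x @\<^sub>v 0\<^sub>v m) = (P *\<^sub>v x) @\<^sub>v (C *\<^sub>v x)"
    using four_block_mat_mult_vec[OF P Q C R x(1) zero_carrier_vec] P C x
      mult_mat_vec_zero[OF Q] mult_mat_vec_zero[OF R] by simp
  then have "(x @\<^sub>v 0\<^sub>v m) \<bullet> (four_block_mat P Q C R *\<^sub>v (x @\<^sub>v 0\<^sub>v m)) = x \<bullet> (P *\<^sub>v x)"
    using scalar_prod_append[of x n "0\<^sub>v m" m "P *\<^sub>v x" "C *\<^sub>v x"] P C x by simp
  moreover have "x @\<^sub>v 0\<^sub>v m \<in> carrier_vec (n + m)" "x @\<^sub>v 0\<^sub>v m \<noteq> 0\<^sub>v (n + m)"
    using x append_vec_eq_zero_iff[OF x(1) zero_carrier_vec] by auto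
  ultimately show "x \<bullet> (P *\<^sub>v x) > 0"
    using pos_def_matD(3)[OF M, of "x @\<^sub>v 0\<^sub>v m"] P R by simp
qed (use assms in auto)

lemma Re_cnj_scalar_prod_of_real_mat:
  fixes M :: "real mat" and w :: "complex vec"
  assumes "M \<in> carrier_mat m m" and "w \<in> carrier_vec m"
  shows "Re (map_vec cnj w \<bullet> (map_mat of_real M *\<^sub>v w)) =
    map_vec Re w \<bullet> (M *\<^sub>v map_vec Re w) + map_vec Im w \<bullet> (M *\<^sub>v map_vec Im w)"
  using assms by (auto simp: scalar_prod_def mult_mat_vec_def sum_distrib_left row_def
      algebra_simps sum.distrib)

lemma pos_def_mat_Re_cnj_scalar_prod_pos:
  assumes M: "pos_def_mat M"
    and w: "w \<in> carrier_vec (dim_row M)" "w \<noteq> 0\<^sub>v (dim_row M)"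
  shows "Re (map_vec cnj w \<bullet> (map_mat of_real M *\<^sub>v w)) > 0"
proof -
  define m where "m = dim_row M"
  note Mc = pos_def_matD(1)[OF M, folded m_def] and pos = pos_def_matD(3)[OF M, folded m_def]
  have nonneg: "x \<bullet> (M *\<^sub>v x) \<ge> 0" if "x \<in> carrier_vec m" for x
  proof (cases "x = 0\<^sub>v m")
    case True
    then show ?thesis using Mc by simp
  next
    case False
    then show ?thesis using pos[OF that] by simp
  qed
  let ?a = "map_vec Re w" and ?b = "map_vec Im w"
  have ab: "?a \<in> carrier_vec m" "?b \<in> carrier_vec m"
    using w unfolding m_def by auto
  have "?a \<noteq> 0\<^sub>v m \<or> ?b \<noteq> 0\<^sub>v m"
  proof (rule ccontr)
    assume "\<not> (?a \<noteq> 0\<^sub>v m \<or> ?b \<noteq> 0\<^sub>v m)"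
    then have "Re (w $ i) = 0 \<and> Im (w $ i) = 0" if "i < m" for i
      using that w unfolding m_def by (metis carrier_vecD index_map_vec(1) index_zero_vec(1))
    then have "w = 0\<^sub>v m"
      using w unfolding m_def by (intro eq_vecI) (auto simp: complex_eq_iff)
    with w show False
      unfolding m_def by simp
  qed
  then have "?a \<bullet> (M *\<^sub>v ?a) + ?b \<bullet> (M *\<^sub>v ?b) > 0"
    using pos[OF ab(1)] pos[OF ab(2)] nonneg[OF ab(1)] nonneg[OF ab(2)] by fastforce
  then show ?thesis
    using Re_cnj_scalar_prod_of_real_mat[OF Mc] w unfolding m_def by simp
qed

lemma mat_inv_det_nonzero:
  fixes A :: "'a :: field mat"
  assumes A: "A \<in> carrier_mat n n" and "det A \<noteq> 0"
  shows "mat_inv A \<in> carrier_mat n n" and "A * mat_inv A = 1\<^sub>m n"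
proof -
  obtain B where "B \<in> carrier_mat n n" "B * A = 1\<^sub>m n" "A * B = 1\<^sub>m n"
    using det_non_zero_imp_unit[OF assms, of undefined] unfolding Units_def ring_mat_def by auto
  then have "\<exists>B. B \<in> carrier_mat (dim_row A) (dim_row A) \<and> inverts_mat A B \<and> inverts_mat B A"
    using A unfolding inverts_mat_def by auto
  from someI_ex[OF this, folded mat_inv_def]
  show "mat_inv A \<in> carrier_mat n n" and "A * mat_inv A = 1\<^sub>m n"
    using A unfolding inverts_mat_def by auto
qed

lemma mult_symplectic_four_block_mat:
  fixes A B C D :: "'a :: ring_1 mat"
  assumes "A \<in> carrier_mat n nc1" "B \<in> carrier_mat n nc2"
    and "C \<in> carrier_mat n nc1" "D \<in> carrier_mat n nc2"
  shows "four_block_mat (0\<^sub>m n n) (- 1\<^sub>m n) (1\<^sub>m n) (0\<^sub>m n n) * four_block_mat A B C D =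
    four_block_mat (- C) (- D) A B"
  using assms by (subst mult_four_block_mat) (auto intro!: cong_four_block_mat eq_matI)

lemma symplectic_pivot_eigenvector_mult_vec:
  fixes P Pinv Q C R :: "'a :: comm_ring_1 mat"
  assumes P: "P \<in> carrier_mat n n" and Pinv: "Pinv \<in> carrier_mat n n"
    and Q: "Q \<in> carrier_mat n n" and C: "C \<in> carrier_mat n n" and R: "R \<in> carrier_mat n n"
    and inv: "P * Pinv = 1\<^sub>m n" and x: "x \<in> carrier_vec n" and y: "y \<in> carrier_vec n"
    and eig: "(four_block_mat (0\<^sub>m n n) (- 1\<^sub>m n) (1\<^sub>m n) (0\<^sub>m n n) *
        four_block_mat Pinv (- (Pinv * Q)) (- (C * Pinv)) (C * Pinv * Q - R)) *\<^sub>v (x @\<^sub>v y) =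
      l \<cdot>\<^sub>v (x @\<^sub>v y)"
  shows "four_block_mat P Q C R *\<^sub>v ((l \<cdot>\<^sub>v y) @\<^sub>v y) = x @\<^sub>v (l \<cdot>\<^sub>v x)"
proof -
  define a where "a = Pinv *\<^sub>v x"
  define b where "b = Pinv *\<^sub>v (Q *\<^sub>v y)"
  have ab: "a \<in> carrier_vec n" "b \<in> carrier_vec n"
    unfolding a_def b_def using Pinv Q x y by auto
  have blocks: "C * Pinv \<in> carrier_mat n n" "C * Pinv * Q \<in> carrier_mat n n" "Pinv * Q \<in> carrier_mat n n"
    using C Pinv Q by auto
  have "four_block_mat (0\<^sub>m n n) (- 1\<^sub>m n) (1\<^sub>m n) (0\<^sub>m n n) *
        four_block_mat Pinv (- (Pinv * Q)) (- (C * Pinv)) (C * Pinv * Q - R) =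
      four_block_mat (C * Pinv) (R - C * Pinv * Q) Pinv (- (Pinv * Q))"
    using P Pinv Q C R by (subst mult_symplectic_four_block_mat) (auto intro!: cong_four_block_mat eq_matI)
  then have "l \<cdot>\<^sub>v (x @\<^sub>v y) = four_block_mat (C * Pinv) (R - C * Pinv * Q) Pinv (- (Pinv * Q)) *\<^sub>v (x @\<^sub>v y)"
    using eig by simp
  also have "\<dots> = (C * Pinv *\<^sub>v x + (R - C * Pinv * Q) *\<^sub>v y) @\<^sub>v (Pinv *\<^sub>v x + - (Pinv * Q) *\<^sub>v y)"
    by (rule four_block_mat_mult_vec[OF blocks(1) minus_carrier_mat[OF blocks(2)] Pinv
          uminus_carrier_mat[OF blocks(3)] x y])
  also have "\<dots> = (C *\<^sub>v a + (R *\<^sub>v y - C *\<^sub>v b)) @\<^sub>v (a + - b)"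
    unfolding a_def b_def using blocks Pinv C Q R x y
    by (simp add: minus_mult_distrib_mat_vec assoc_mult_mat_vec[OF C blocks(3) y])
  finally have "(l \<cdot>\<^sub>v x) @\<^sub>v (l \<cdot>\<^sub>v y) = (C *\<^sub>v a + (R *\<^sub>v y - C *\<^sub>v b)) @\<^sub>v (a + - b)"
    using x y by (metis smult_append_vec)
  moreover have "l \<cdot>\<^sub>v x \<in> carrier_vec n" "C *\<^sub>v a + (R *\<^sub>v y - C *\<^sub>v b) \<in> carrier_vec n"
    using C R ab x y by auto
  ultimately have E1: "l \<cdot>\<^sub>v x = C *\<^sub>v a + (R *\<^sub>v y - C *\<^sub>v b)" and "l \<cdot>\<^sub>v y = a + - b"
    by (simp_all add: append_vec_eq)
  then have E2: "l \<cdot>\<^sub>v y = a - b"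
    using minus_add_uminus_vec[OF ab(1,2)] by simp
  have Pa: "P *\<^sub>v a = x"
    unfolding a_def using assoc_mult_mat_vec[OF P Pinv x, symmetric] inv x by simp
  have Pb: "P *\<^sub>v b = Q *\<^sub>v y"
    unfolding b_def using assoc_mult_mat_vec[OF P Pinv, of "Q *\<^sub>v y", symmetric] inv Q y by simp
  have "four_block_mat P Q C R *\<^sub>v ((l \<cdot>\<^sub>v y) @\<^sub>v y) =
      (P *\<^sub>v (a - b) + Q *\<^sub>v y) @\<^sub>v (C *\<^sub>v (a - b) + R *\<^sub>v y)"
    unfolding E2 by (rule four_block_mat_mult_vec[OF P Q C R _ y]) (use ab in simp)
  also have "\<dots> = x @\<^sub>v (l \<cdot>\<^sub>v x)"
    unfolding E1 mult_minus_distrib_mat_vec[OF P ab(1,2)]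
      mult_minus_distrib_mat_vec[OF C ab(1,2)] Pa Pb
    using P Q C R ab x y by (intro arg_cong2[where f = append_vec] eq_vecI) auto
  finally show ?thesis .
qed

lemma symplectic_pivot_eigenvalue_Re_nonzero:
  fixes P Pinv Q C R :: "complex mat"
  assumes P: "P \<in> carrier_mat n n" and Pinv: "Pinv \<in> carrier_mat n n"
    and Q: "Q \<in> carrier_mat n n" and C: "C \<in> carrier_mat n n" and R: "R \<in> carrier_mat n n"
    and inv: "P * Pinv = 1\<^sub>m n"
    and anisotropic: "\<And>w. w \<in> carrier_vec (n + n) \<Longrightarrow> w \<noteq> 0\<^sub>v (n + n) \<Longrightarrow>
      map_vec cnj w \<bullet> (four_block_mat P Q C R *\<^sub>v w) \<noteq> 0"
    and eig: "eigenvector (four_block_mat (0\<^sub>m n n) (- 1\<^sub>m n) (1\<^sub>m n) (0\<^sub>m n n) *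
        four_block_mat Pinv (- (Pinv * Q)) (- (C * Pinv)) (C * Pinv * Q - R)) v l"
  shows "Re l \<noteq> 0"
proof
  assume "Re l = 0"
  then have cnj_l: "cnj l + l = 0"
    by (simp add: complex_eq_iff)
  define x where "x = vec_first v n"
  define y where "y = vec_last v n"
  have v: "v \<in> carrier_vec (n + n)" "v \<noteq> 0\<^sub>v (n + n)"
    using eig P unfolding eigenvector_def by auto
  then have xy: "v = x @\<^sub>v y" "x \<in> carrier_vec n" "y \<in> carrier_vec n"
    unfolding x_def y_def by auto
  define w where "w = (l \<cdot>\<^sub>v y) @\<^sub>v y"
  have w: "w \<in> carrier_vec (n + n)"
    unfolding w_def using xy by auto
  have Mw: "four_block_mat P Q C R *\<^sub>v w = x @\<^sub>v (l \<cdot>\<^sub>v x)"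
    unfolding w_def using eig P xy
    by (intro symplectic_pivot_eigenvector_mult_vec[OF P Pinv Q C R inv]) (auto simp: eigenvector_def)
  have w0: "w \<noteq> 0\<^sub>v (n + n)"
  proof
    assume w0: "w = 0\<^sub>v (n + n)"
    then have "y = 0\<^sub>v n"
      unfolding w_def using xy append_vec_eq_zero_iff[of "l \<cdot>\<^sub>v y" n y n] by auto
    moreover have "x @\<^sub>v (l \<cdot>\<^sub>v x) = 0\<^sub>v (n + n)"
      unfolding Mw[symmetric] w0 using mult_mat_vec_zero[OF four_block_carrier_mat[OF P R]] .
    then have "x = 0\<^sub>v n"
      using xy append_vec_eq_zero_iff[of x n "l \<cdot>\<^sub>v x" n] by auto
    ultimately show False
      using v xy append_vec_eq_zero_iff[of x n y n] by auto
  qed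
  have cw: "map_vec cnj w = (cnj l \<cdot>\<^sub>v map_vec cnj y) @\<^sub>v map_vec cnj y"
    unfolding w_def using xy by auto
  have "map_vec cnj w \<bullet> (four_block_mat P Q C R *\<^sub>v w) =
      (cnj l \<cdot>\<^sub>v map_vec cnj y) \<bullet> x + map_vec cnj y \<bullet> (l \<cdot>\<^sub>v x)"
    unfolding Mw cw using xy by (intro scalar_prod_append) auto
  also have "\<dots> = (cnj l + l) * (map_vec cnj y \<bullet> x)"
    using xy by (simp add: distrib_right)
  finally show False
    using anisotropic[OF w w0] cnj_l by simp
qed

theorem corollary2p2:
  fixes P Q R :: "real mat" and n :: nat
  assumes "P \<in> carrier_mat n n" and "Q \<in> carrier_mat n n" and "R \<in> carrier_mat n n"
    and "P\<^sup>T = P" and "R\<^sup>T = R"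
    and "pos_def_mat (four_block_mat P Q Q\<^sup>T R)"
  shows "hyperbolic_mat
     (four_block_mat (0\<^sub>m n n) (- 1\<^sub>m n) (1\<^sub>m n) (0\<^sub>m n n) *
      four_block_mat (mat_inv P) (- (mat_inv P * Q))
                     (- (Q\<^sup>T * mat_inv P)) (Q\<^sup>T * mat_inv P * Q - R))"
proof -
  note P = assms(1) and Q = assms(2) and R = assms(3) and M = assms(6)
  have QT: "Q\<^sup>T \<in> carrier_mat n n"
    using Q by simp
  have "det P \<noteq> 0"
    using pos_def_mat_four_block_upper_left[OF P Q QT R assms(4) M] by (rule pos_def_mat_det_nonzero)
  then have Pinv: "mat_inv P \<in> carrier_mat n n" and inv: "P * mat_inv P = 1\<^sub>m n"
    using mat_inv_det_nonzero[OF P] by auto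
  let ?c = "map_mat complex_of_real"
  have anisotropic: "map_vec cnj w \<bullet> (four_block_mat (?c P) (?c Q) (?c (Q\<^sup>T)) (?c R) *\<^sub>v w) \<noteq> 0"
    if "w \<in> carrier_vec (n + n)" "w \<noteq> 0\<^sub>v (n + n)" for w
  proof -
    have "Re (map_vec cnj w \<bullet> (?c (four_block_mat P Q Q\<^sup>T R) *\<^sub>v w)) > 0"
      using pos_def_mat_Re_cnj_scalar_prod_pos[OF M] that P R by simp
    then show ?thesis
      unfolding map_four_block_mat[OF P Q QT R] by auto
  qed
  have inv_c: "?c P * ?c (mat_inv P) = 1\<^sub>m n"
    using of_real_hom.mat_hom_mult[OF P Pinv] inv of_real_hom.mat_hom_one by metis
  show ?thesis
    unfolding hyperbolic_mat_def eigenvalue_def of_real_hom.mat_hom_symplectic_pivot[OF Pinv Q QT R]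
    using symplectic_pivot_eigenvalue_Re_nonzero[OF _ _ _ _ _ inv_c anisotropic] P Q QT R Pinv
    by (meson map_carrier_mat)
qed

end
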